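(* Let $X$ be a random vector with values in $\mathcal{X}\subset\mathbb{R}^d$ whose distribution has a density $f$ with respect to Lebesgue measure $Leb$. Assume that $f$ is bounded ($\|f\|_\infty<\infty$) and that $\mathbb{P}\{f(X)=c\}=0$ for all $c\ge 0$. Define, for $t>0$, $$\textsc{EM}^*(t)=\max_{\Omega\ \text{Borel}}\big\{\mathbb{P}(X\in\Omega)-t\,Leb(\Omega)\big\},\qquad \lambda(t)=Leb(\{x\in\mathcal{X}: f(x)\ge t\}).$$ Then $\textsc{EM}^*$ is differentiable on $(0,\infty)$ with $\textsc{EM}^{*\prime}(t)=-\lambda(t)$ for all $t>0$. Moreover, since $t\mapsto\lambda(t)$ is decreasing, $\textsc{EM}^*$ is convex.
   Context: $Leb$ denotes Lebesgue measure on $\mathbb{R}^d$. *)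

theory Defs
  imports "HOL-Probability.Probability"
begin

text \<open>Sets of infinite Lebesgue measure give value minus infinity and are irrelevant
  (the empty set gives 0), so the supremum is taken over Borel sets of finite
  Lebesgue measure.\<close>
definition EM_star :: "'a measure \<Rightarrow> ('a \<Rightarrow> 'd::euclidean_space) \<Rightarrow> real \<Rightarrow> real" where
  "EM_star M X t =
     (SUP \<Omega> \<in> {\<Omega> \<in> sets borel. emeasure lborel \<Omega> < \<infinity>}.
        measure M (X -` \<Omega> \<inter> space M) - t * measure lborel \<Omega>)"

definition level_volume :: "'d::euclidean_space set \<Rightarrow> ('d \<Rightarrow> real) \<Rightarrow> real \<Rightarrow> real" where
  "level_volume S f t = measure lborel {x \<in> S. f x \<ge> t}"

end

theory Submission
  imports Defs
begin

text \<open>For \<open>t > 0\<close> the excess mass of a Borel set \<open>\<Omega>\<close> is \<open>\<integral>\<^sub>\<Omega> (f - t)\<close>, which is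
  maximised by the superlevel set \<open>{f \<ge> t}\<close>; so \<open>EM*(t) = P(f(X) \<ge> t) - t \<lambda>(t)\<close>, and evaluating
  the objective at level \<open>s\<close> on the optimal set for \<open>t\<close> gives the supporting line
  \<open>EM*(s) \<ge> EM*(t) - (s - t) \<lambda>(t)\<close>. Thus \<open>-\<lambda>\<close> is a nondecreasing subgradient of \<open>EM*\<close>, and it is
  continuous because the level sets \<open>{f = t}\<close> carry no probability, hence no volume;
  a continuous subgradient is the derivative.\<close>

lemma measure_diff_eq_measure_Diff:
  assumes "A \<in> fmeasurable M" "B \<in> fmeasurable M"
  shows "measure M A - measure M B = measure M (A - B) - measure M (B - A)"
  using measure_Un2[OF assms] measure_Un2[OF assms(2,1)] by (simp add: Un_commute)

lemma has_real_derivative_if_supporting_lines: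
  fixes g g' :: "real \<Rightarrow> real"
  assumes "open T" "t \<in> T"
    and support: "\<And>s u. s \<in> T \<Longrightarrow> u \<in> T \<Longrightarrow> g u + (s - u) * g' u \<le> g s"
    and "isCont g' t"
  shows "(g has_real_derivative g' t) (at t)"
  unfolding has_field_derivative_iff
proof (rule tendsto_sandwich)
  have "min (g' s) (g' t) \<le> (g s - g t) / (s - t) \<and> (g s - g t) / (s - t) \<le> max (g' s) (g' t)"
    if "s \<in> T" "s \<noteq> t" for s
  proof -
    have "(s - t) * g' t \<le> g s - g t" "g s - g t \<le> (s - t) * g' s"
      using support[OF that(1) \<open>t \<in> T\<close>] support[OF \<open>t \<in> T\<close> that(1)] by (simp_all add: algebra_simps)
    then have "g' t \<le> (g s - g t) / (s - t) \<and> (g s - g t) / (s - t) \<le> g' s \<or>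
        g' s \<le> (g s - g t) / (s - t) \<and> (g s - g t) / (s - t) \<le> g' t"
      using \<open>s \<noteq> t\<close> by (cases "s < t")
        (simp_all add: neg_le_divide_eq neg_divide_le_eq pos_le_divide_eq pos_divide_le_eq
          mult.commute)
    then show ?thesis
      by linarith
  qed
  moreover have "eventually (\<lambda>s. s \<in> T \<and> s \<noteq> t) (at t)"
    using eventually_nhds_in_open[OF assms(1,2)]
    by (auto simp: eventually_at_filter elim: eventually_mono)
  ultimately show "eventually (\<lambda>s. min (g' s) (g' t) \<le> (g s - g t) / (s - t)) (at t)"
    "eventually (\<lambda>s. (g s - g t) / (s - t) \<le> max (g' s) (g' t)) (at t)"
    by (auto elim!: eventually_mono)
  show "((\<lambda>s. min (g' s) (g' t)) \<longlongrightarrow> g' t) (at t)" "((\<lambda>s. max (g' s) (g' t)) \<longlongrightarrow> g' t) (at t)"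
    using tendsto_min[OF isContD[OF \<open>isCont g' t\<close>] tendsto_const, of "g' t"]
      tendsto_max[OF isContD[OF \<open>isCont g' t\<close>] tendsto_const, of "g' t"] by simp_all
qed

lemma emeasure_density_ge_on_superlevel:
  fixes f :: "'d::euclidean_space \<Rightarrow> real"
  assumes [measurable]: "f \<in> borel_measurable borel" "B \<in> sets borel"
    and "\<And>x. x \<in> B \<Longrightarrow> s \<le> f x"
  shows "ennreal s * emeasure lborel B \<le> emeasure (density lborel f) B"
proof -
  have "ennreal s * emeasure lborel B = (\<integral>\<^sup>+x. ennreal s * indicator B x \<partial>lborel)"
    by (simp add: nn_integral_cmult_indicator)
  also have "\<dots> \<le> (\<integral>\<^sup>+x. ennreal (f x) * indicator B x \<partial>lborel)"
    using assms(3) by (intro nn_integral_mono) (auto simp: indicator_def intro: ennreal_leI)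
  also have "\<dots> = emeasure (density lborel f) B"
    by (simp add: emeasure_density)
  finally show ?thesis .
qed

lemma emeasure_density_le_on_sublevel:
  fixes f :: "'d::euclidean_space \<Rightarrow> real"
  assumes [measurable]: "f \<in> borel_measurable borel" "B \<in> sets borel"
    and "\<And>x. x \<in> B \<Longrightarrow> f x \<le> s"
  shows "emeasure (density lborel f) B \<le> ennreal s * emeasure lborel B"
proof -
  have "emeasure (density lborel f) B = (\<integral>\<^sup>+x. ennreal (f x) * indicator B x \<partial>lborel)"
    by (simp add: emeasure_density)
  also have "\<dots> \<le> (\<integral>\<^sup>+x. ennreal s * indicator B x \<partial>lborel)"
    using assms(3) by (intro nn_integral_mono) (auto simp: indicator_def intro: ennreal_leI)
  also have "\<dots> = ennreal s * emeasure lborel B"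
    by (simp add: nn_integral_cmult_indicator)
  finally show ?thesis .
qed

lemma emeasure_superlevel_finite:
  fixes f :: "'d::euclidean_space \<Rightarrow> real"
  assumes [measurable]: "f \<in> borel_measurable borel"
    and "finite_measure (density lborel f)" "0 < s"
  shows "emeasure lborel {x. s \<le> f x} < \<infinity>"
proof -
  have "ennreal s * emeasure lborel {x. s \<le> f x} \<le> emeasure (density lborel f) {x. s \<le> f x}"
    by (rule emeasure_density_ge_on_superlevel) auto
  also have "\<dots> < \<infinity>"
    using finite_measure.emeasure_finite[OF assms(2)] by (simp add: less_top)
  finally show ?thesis
    using \<open>0 < s\<close> by (auto simp: ennreal_mult_less_top)
qed

lemma measure_density_ge_on_superlevel:
  fixes f :: "'d::euclidean_space \<Rightarrow> real"
  assumes [measurable]: "f \<in> borel_measurable borel" "B \<in> sets borel"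
    and "finite_measure (density lborel f)" "0 < s" "\<And>x. x \<in> B \<Longrightarrow> s \<le> f x"
  shows "s * measure lborel B \<le> measure (density lborel f) B"
proof -
  have "emeasure lborel B \<le> emeasure lborel {x. s \<le> f x}"
    using assms(5) by (intro emeasure_mono) auto
  also have "\<dots> < \<infinity>"
    using assms(3,4) by (rule emeasure_superlevel_finite[OF assms(1)])
  finally have "ennreal (s * measure lborel B) = ennreal s * emeasure lborel B"
    using assms(4) by (simp add: ennreal_mult emeasure_eq_ennreal_measure)
  also have "\<dots> \<le> emeasure (density lborel f) B"
    by (rule emeasure_density_ge_on_superlevel[OF assms(1,2,5)])
  finally show ?thesis
    by (simp add: finite_measure.emeasure_eq_measure[OF assms(3)])
qed

lemma measure_density_le_on_sublevel:
  fixes f :: "'d::euclidean_space \<Rightarrow> real"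
  assumes [measurable]: "f \<in> borel_measurable borel" "B \<in> sets borel"
    and "finite_measure (density lborel f)" "emeasure lborel B < \<infinity>"
    and "0 \<le> s" "\<And>x. x \<in> B \<Longrightarrow> f x \<le> s"
  shows "measure (density lborel f) B \<le> s * measure lborel B"
proof -
  have "ennreal (measure (density lborel f) B) = emeasure (density lborel f) B"
    by (simp add: finite_measure.emeasure_eq_measure[OF assms(3)])
  also have "\<dots> \<le> ennreal s * emeasure lborel B"
    by (rule emeasure_density_le_on_sublevel[OF assms(1,2,6)])
  also have "\<dots> = ennreal (s * measure lborel B)"
    using assms(4,5) by (simp add: ennreal_mult emeasure_eq_ennreal_measure)
  finally show ?thesis
    using assms(5) by simp
qed

lemma measure_superlevel_antimono:
  fixes f :: "'d::euclidean_space \<Rightarrow> real"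
  assumes [measurable]: "f \<in> borel_measurable borel"
    and "finite_measure (density lborel f)" and "0 < s" "s \<le> t"
  shows "measure lborel {x. t \<le> f x} \<le> measure lborel {x. s \<le> f x}"
  using emeasure_superlevel_finite[OF assms(1,2,3)] \<open>s \<le> t\<close>
  by (intro measure_mono_fmeasurable) (auto simp: fmeasurable_def)

lemma isCont_measure_superlevel:
  fixes f :: "'d::euclidean_space \<Rightarrow> real"
  assumes [measurable]: "f \<in> borel_measurable borel"
    and fin: "finite_measure (density lborel f)" and "0 < t"
    and level_null: "emeasure (density lborel f) {x. f x = t} = 0"
  shows "isCont (\<lambda>s. measure lborel {x. s \<le> f x}) t"
proof -
  define D where "D = {x. t / 2 \<le> f x}"
  have [measurable]: "D \<in> sets borel"
    unfolding D_def by measurable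
  \<comment> \<open>Near \<open>t\<close>, \<open>s \<mapsto> measure lborel {x. s \<le> f x}\<close> is the distribution function at \<open>-s\<close>
    of \<open>-f\<close> under Lebesgue measure on \<open>D\<close>, a finite measure without an atom at \<open>-t\<close>.\<close>
  define \<mu> where "\<mu> = distr (density lborel (indicator D)) borel (\<lambda>x. - f x)"
  have "emeasure lborel D < \<infinity>"
    unfolding D_def using \<open>0 < t\<close> by (intro emeasure_superlevel_finite[OF _ fin]) auto
  then interpret \<mu>: finite_borel_measure \<mu>
    unfolding finite_borel_measure_def finite_borel_measure_axioms_def
    by (auto simp: \<mu>_def emeasure_distr emeasure_restricted intro!: finite_measureI)
  have \<mu>_superlevel: "cdf \<mu> (- s) = measure lborel {x. s \<le> f x}" if "t / 2 \<le> s" for s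
  proof -
    have "cdf \<mu> (- s) = measure lborel (D \<inter> {x. s \<le> f x})"
      by (simp add: cdf_def \<mu>_def measure_distr measure_restricted vimage_def)
    also have "D \<inter> {x. s \<le> f x} = {x. s \<le> f x}"
      using that by (auto simp: D_def)
    finally show ?thesis .
  qed
  have "t * measure lborel {x. f x = t} \<le> measure (density lborel f) {x. f x = t}"
    using \<open>0 < t\<close> by (intro measure_density_ge_on_superlevel[OF _ _ fin]) auto
  also have "\<dots> = 0"
    using level_null by (simp add: measure_def)
  finally have "measure lborel {x. f x = t} = 0"
    using \<open>0 < t\<close> by (simp add: mult_le_0_iff measure_le_0_iff)
  moreover have "D \<inter> {x. f x = t} = {x. f x = t}"
    using \<open>0 < t\<close> by (auto simp: D_def)
  ultimately have "measure \<mu> {- t} = 0"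
    by (simp add: \<mu>_def measure_distr measure_restricted vimage_def)
  then have "isCont (\<lambda>s. cdf \<mu> (- s)) t"
    by (intro isCont_o2[OF continuous_ident[THEN continuous_minus]]) (simp add: \<mu>.isCont_cdf)
  moreover have "eventually (\<lambda>s. cdf \<mu> (- s) = measure lborel {x. s \<le> f x}) (nhds t)"
    using eventually_nhds_in_open[of "{t / 2 <..}" t] \<open>0 < t\<close>
    by (auto elim!: eventually_mono intro: \<mu>_superlevel)
  ultimately show ?thesis
    by (simp add: isCont_cong)
qed

lemma excess_mass_le_superlevel:
  fixes f :: "'d::euclidean_space \<Rightarrow> real"
  assumes [measurable]: "f \<in> borel_measurable borel" "\<Omega> \<in> sets borel"
    and fin: "finite_measure (density lborel f)" and \<Omega>_fin: "emeasure lborel \<Omega> < \<infinity>"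
    and "0 < t"
  defines "A \<equiv> {x. t \<le> f x}"
  shows "measure (density lborel f) \<Omega> - t * measure lborel \<Omega>
    \<le> measure (density lborel f) A - t * measure lborel A"
proof -
  let ?\<nu> = "density lborel f"
  have [measurable]: "A \<in> sets borel"
    unfolding A_def by measurable
  have A_fin: "emeasure lborel A < \<infinity>"
    unfolding A_def using emeasure_superlevel_finite[OF assms(1) fin \<open>0 < t\<close>] .
  have "\<Omega> \<in> fmeasurable ?\<nu>" "A \<in> fmeasurable ?\<nu>"
    by (simp_all add: finite_measure.fmeasurable_eq_sets[OF fin])
  then have \<nu>_diff: "measure ?\<nu> \<Omega> - measure ?\<nu> A = measure ?\<nu> (\<Omega> - A) - measure ?\<nu> (A - \<Omega>)"
    by (rule measure_diff_eq_measure_Diff)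
  have "\<Omega> \<in> fmeasurable lborel" "A \<in> fmeasurable lborel"
    using \<Omega>_fin A_fin by (auto simp: fmeasurable_def)
  then have lborel_diff: "measure lborel \<Omega> - measure lborel A
      = measure lborel (\<Omega> - A) - measure lborel (A - \<Omega>)"
    by (rule measure_diff_eq_measure_Diff)
  have "emeasure lborel (\<Omega> - A) < \<infinity>"
    using \<Omega>_fin by (auto intro: le_less_trans[OF emeasure_mono])
  then have below: "measure ?\<nu> (\<Omega> - A) \<le> t * measure lborel (\<Omega> - A)"
    using \<open>0 < t\<close>
    by (intro measure_density_le_on_sublevel[OF assms(1) _ fin]) (auto simp: A_def)
  have above: "t * measure lborel (A - \<Omega>) \<le> measure ?\<nu> (A - \<Omega>)"
    using \<open>0 < t\<close>
    by (intro measure_density_ge_on_superlevel[OF assms(1) _ fin]) (auto simp: A_def)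
  have "t * measure lborel \<Omega> - t * measure lborel A
      = t * measure lborel (\<Omega> - A) - t * measure lborel (A - \<Omega>)"
    using lborel_diff by (simp add: right_diff_distrib[symmetric])
  with \<nu>_diff below above show ?thesis
    by linarith
qed

lemma EM_star_density_eq_superlevel:
  fixes f :: "'d::euclidean_space \<Rightarrow> real"
  assumes [measurable]: "f \<in> borel_measurable borel"
    and fin: "finite_measure (density lborel f)" and "0 < t"
  shows "EM_star (density lborel f) (\<lambda>x. x) t
    = measure (density lborel f) {x. t \<le> f x} - t * measure lborel {x. t \<le> f x}"
  unfolding EM_star_def
proof (rule cSup_eq_maximum)
  have "{x. t \<le> f x} \<in> sets borel"
    by measurable
  then show "measure (density lborel f) {x. t \<le> f x} - t * measure lborel {x. t \<le> f x}
      \<in> (\<lambda>\<Omega>. measure (density lborel f) ((\<lambda>x. x) -` \<Omega> \<inter> space (density lborel f))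
            - t * measure lborel \<Omega>)
          ` {\<Omega> \<in> sets borel. emeasure lborel \<Omega> < \<infinity>}"
    using emeasure_superlevel_finite[OF assms] by auto
qed (auto intro!: excess_mass_le_superlevel[OF _ _ fin] \<open>0 < t\<close>)

lemma EM_star_density_supporting_line:
  fixes f :: "'d::euclidean_space \<Rightarrow> real"
  assumes [measurable]: "f \<in> borel_measurable borel"
    and fin: "finite_measure (density lborel f)" and "0 < s" "0 < t"
  shows "EM_star (density lborel f) (\<lambda>x. x) t + (s - t) * - measure lborel {x. t \<le> f x}
    \<le> EM_star (density lborel f) (\<lambda>x. x) s"
proof -
  have "EM_star (density lborel f) (\<lambda>x. x) t + (s - t) * - measure lborel {x. t \<le> f x}
      = measure (density lborel f) {x. t \<le> f x} - s * measure lborel {x. t \<le> f x}"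
    by (simp add: EM_star_density_eq_superlevel[OF assms(1,2,4)] algebra_simps)
  also have "\<dots> \<le> EM_star (density lborel f) (\<lambda>x. x) s"
    unfolding EM_star_density_eq_superlevel[OF assms(1-3)]
    using emeasure_superlevel_finite[OF assms(1,2,4)] \<open>0 < s\<close>
    by (intro excess_mass_le_superlevel[OF _ _ fin]) auto
  finally show ?thesis .
qed

lemma EM_star_density_has_real_derivative:
  fixes f :: "'d::euclidean_space \<Rightarrow> real"
  assumes [measurable]: "f \<in> borel_measurable borel"
    and "finite_measure (density lborel f)"
    and levels_null: "\<And>c. 0 < c \<Longrightarrow> emeasure (density lborel f) {x. f x = c} = 0"
    and "0 < t"
  shows "(EM_star (density lborel f) (\<lambda>x. x)
    has_real_derivative - measure lborel {x. t \<le> f x}) (at t)"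
  using \<open>0 < t\<close> EM_star_density_supporting_line[OF assms(1,2)]
    isCont_measure_superlevel[OF assms(1,2) _ levels_null]
  by (intro has_real_derivative_if_supporting_lines[where T = "{0<..}"]) auto

lemma convex_on_EM_star_density:
  fixes f :: "'d::euclidean_space \<Rightarrow> real"
  assumes [measurable]: "f \<in> borel_measurable borel"
    and "finite_measure (density lborel f)"
    and "\<And>c. 0 < c \<Longrightarrow> emeasure (density lborel f) {x. f x = c} = 0"
  shows "convex_on {0<..} (EM_star (density lborel f) (\<lambda>x. x))"
  using EM_star_density_has_real_derivative[OF assms] measure_superlevel_antimono[OF assms(1,2)]
  by (intro convex_on_realI[where f' = "\<lambda>t. - measure lborel {x. t \<le> f x}"]) auto

lemma EM_star_distributed:
  assumes "distributed M lborel X f"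
  shows "EM_star M X = EM_star (density lborel f) (\<lambda>x. x)"
proof -
  have "measure M (X -` \<Omega> \<inter> space M) = measure (density lborel f) \<Omega>" if "\<Omega> \<in> sets borel" for \<Omega>
    using that distributed_measurable[OF assms]
    by (simp add: measure_distr distributed_distr_eq_density[OF assms, symmetric])
  then show ?thesis
    unfolding EM_star_def by (intro ext SUP_cong) auto
qed

lemma distributed_mult_indicator:
  assumes "distributed M N X f" "S \<in> sets N" "\<And>\<omega>. \<omega> \<in> space M \<Longrightarrow> X \<omega> \<in> S"
  shows "distributed M N X (\<lambda>x. f x * indicator S x)"
proof -
  have [measurable]: "f \<in> borel_measurable N" "S \<in> sets N"
    using assms(1,2) by (auto simp: distributed_def)
  have "emeasure (density N f) (space N - S) = emeasure M (X -` (space N - S) \<inter> space M)"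
    using assms(1,2)
    by (simp add: distributed_distr_eq_density[symmetric] emeasure_distr distributed_measurable)
  also have "X -` (space N - S) \<inter> space M = {}"
    using assms(3) by auto
  finally have "space N - S \<in> null_sets (density N f)"
    by (simp add: null_sets_def)
  then have "AE x in N. x \<notin> S \<longrightarrow> f x = 0"
    by (auto simp: null_sets_density_iff)
  then have "density N f = density N (\<lambda>x. f x * indicator S x)"
    by (intro density_cong) (auto simp: indicator_def)
  then show ?thesis
    using assms(1) by (simp add: distributed_def)
qed

theorem proposition1:
  fixes M :: "'a measure" and X :: "'a \<Rightarrow> 'd::euclidean_space"
    and f :: "'d \<Rightarrow> real" and S :: "'d set"
  assumes "prob_space M"
    and "S \<in> sets borel"
    and "\<forall>\<omega>\<in>space M. X \<omega> \<in> S"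
    and "\<forall>x. f x \<ge> 0"
    and "distributed M lborel X (\<lambda>x. ennreal (f x))"
    and "\<exists>B. AE x in lborel. f x \<le> B"
    and "\<forall>c\<ge>0. measure M {\<omega> \<in> space M. f (X \<omega>) = c} = 0"
  shows "(\<forall>t>0. (EM_star M X has_real_derivative (- level_volume S f t)) (at t))
         \<and> convex_on {0<..} (EM_star M X)"
proof -
  interpret prob_space M
    by (rule assms(1))
  \<comment> \<open>\<open>f \<cdot> 1\<^sub>S\<close> is again a density of \<open>X\<close>, agrees with \<open>f\<close> on the range of \<open>X\<close>, and its plain
    superlevel sets of positive level are those in \<open>level_volume S f\<close>.\<close>
  define g where "g = (\<lambda>x. f x * indicator S x)"
  have "(\<lambda>x. ennreal (f x) * indicator S x) = (\<lambda>x. ennreal (g x))"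
    by (auto simp: g_def indicator_def)
  then have distr_g: "distributed M lborel X (\<lambda>x. ennreal (g x))"
    using distributed_mult_indicator[OF assms(5), of S] assms(2,3) by simp
  have g_measurable [measurable]: "g \<in> borel_measurable borel"
    using distributed_real_measurable[OF _ distr_g] assms(4) by (simp add: g_def)
  have fin: "finite_measure (density lborel g)"
    using finite_measure_distr[OF distributed_measurable[OF distr_g]]
    by (simp add: distributed_distr_eq_density[OF distr_g])
  have levels_null: "emeasure (density lborel g) {x. g x = c} = 0" if "0 < c" for c
  proof -
    have "X -` {x. g x = c} \<inter> space M = {\<omega> \<in> space M. f (X \<omega>) = c}"
      using assms(3) by (auto simp: g_def)
    then show ?thesis
      using assms(7) \<open>0 < c\<close> distributed_measurable[OF distr_g]
      by (simp add: distributed_distr_eq_density[OF distr_g, symmetric] emeasure_distr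
          emeasure_eq_measure)
  qed
  have level_volume: "level_volume S f t = measure lborel {x. t \<le> g x}" if "0 < t" for t
    using that unfolding level_volume_def
    by (intro arg_cong[where f = "measure lborel"]) (auto simp: g_def indicator_def)
  show ?thesis
    unfolding EM_star_distributed[OF distr_g]
    using EM_star_density_has_real_derivative[OF g_measurable fin levels_null]
      convex_on_EM_star_density[OF g_measurable fin levels_null] level_volume
    by simp
qed

end
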